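(* Let $A = \{g_n : n \in \mathbb{N}\} \subseteq \mathbb{N}^{\mathbb{N}}$ be an almost disjoint family of functions, let $E \subseteq \mathbb{N}\times\mathbb{N}$, and let $F = \{f_n : n \in \mathbb{N}\} \subseteq \mathbb{N}^{\mathbb{N}}$ be a family not finitely covered by $A$. Then there exists $g : \mathbb{N}\to\mathbb{N}$ that is almost disjoint from every function in $A$, such that $E$ is recursive in $g$, and such that for every $n$ the set $\{k : f_n(k) = g(k)\}$ is infinite.
   Context: Two functions $g_0,g_1\in\mathbb{N}^{\mathbb{N}}$ are almost disjoint if $\{n : g_0(n)=g_1(n)\}$ is finite; an almost disjoint family of functions is a family of pairwise almost disjoint functions. A function $f$ is finitely covered by $A$ if there are $h_0,\dots,h_m\in A$ with $\{k : f(k)\notin\{h_0(k),\dots,h_m(k)\}\}$ finite; $F$ is not finitely covered by $A$ if no member of $F$ is finitely covered by $A$. *)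

theory Defs
  imports Main
begin

definition almost_disjoint :: "(nat \<Rightarrow> nat) \<Rightarrow> (nat \<Rightarrow> nat) \<Rightarrow> bool" where
  "almost_disjoint g0 g1 \<longleftrightarrow> finite {n. g0 n = g1 n}"

definition finitely_covered :: "(nat \<Rightarrow> nat) \<Rightarrow> (nat \<Rightarrow> nat) set \<Rightarrow> bool" where
  "finitely_covered f A \<longleftrightarrow>
     (\<exists>hs. hs \<noteq> [] \<and> set hs \<subseteq> A \<and> finite {k. f k \<notin> (\<lambda>h. h k) ` set hs})"

text \<open>Partial recursive functions relative to an oracle (Kleene's mu-recursive
  functions plus an oracle call), evaluated on argument lists.\<close>
datatype recf =
    Zero
  | Succ
  | Proj nat
  | Comp recf "recf list"
  | Prim recf recf
  | Mn recf
  | Oracle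

inductive eval :: "(nat \<Rightarrow> nat) \<Rightarrow> recf \<Rightarrow> nat list \<Rightarrow> nat \<Rightarrow> bool" for g where
  eval_Zero: "eval g Zero xs 0"
| eval_Succ: "eval g Succ (x # xs) (Suc x)"
| eval_Proj: "i < length xs \<Longrightarrow> eval g (Proj i) xs (xs ! i)"
| eval_Comp: "list_all2 (\<lambda>h y. eval g h xs y) hs ys \<Longrightarrow> eval g f ys z \<Longrightarrow> eval g (Comp f hs) xs z"
| eval_Prim0: "eval g b xs z \<Longrightarrow> eval g (Prim b s) (0 # xs) z"
| eval_PrimS: "eval g (Prim b s) (n # xs) r \<Longrightarrow> eval g s (r # n # xs) z \<Longrightarrow> eval g (Prim b s) (Suc n # xs) z"
| eval_Mn: "eval g f (y # xs) 0 \<Longrightarrow> (\<forall>z<y. \<exists>v. v > 0 \<and> eval g f (z # xs) v) \<Longrightarrow> eval g (Mn f) xs y"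
| eval_Oracle: "eval g Oracle (x # xs) (g x)"

definition recursive_in :: "(nat \<times> nat) set \<Rightarrow> (nat \<Rightarrow> nat) \<Rightarrow> bool" where
  "recursive_in E g \<longleftrightarrow>
     (\<exists>p. \<forall>x y. eval g p [x, y] (if (x, y) \<in> E then 1 else 0))"

end

theory Submission
  imports Defs "HOL-Library.Nat_Bijection" "HOL-Library.Infinite_Set"
begin

(* Enumerate the requirements "agree infinitely often with F n"
   by the stages s = prod_encode (n, B), and build g from a strictly increasing
   sequence of markers 0 = marker 0 < marker 1 < ... .  The half-open interval
   [marker s, marker (s+1)) is the s-th block, on which g avoids G 0, ..., G s:
   at marker s it jumps to marker (s+1), at one "agreement point" it copies
   F n (a place where F n differs from G 0, ..., G s, which exists because F n
   is not finitely covered), and elsewhere it exceeds all of G 0, ..., G s.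
   Hence g meets G i only below marker i, and meets each F n in infinitely
   many blocks.  Since g (marker s) = marker (s+1), the orbit of 0 under g is
   the marker sequence, and the parity of marker (s+1) is chosen to encode
   whether prod_decode s belongs to E; so E is decided by iterating the
   oracle g.  The file first builds the oracle programs for this decision
   procedure, then develops the block decomposition of N induced by a
   strictly increasing sequence, then performs the construction. *)

(* Evaluation rules for projections, successor, oracle and composition with
   the result values fixed, so that they compose well in forward reasoning. *)

lemma eval_Proj0: "eval g (Proj 0) (x # xs) x"
  using eval_Proj[of 0 "x # xs" g] by simp

lemma eval_Proj1: "eval g (Proj 1) (x # y # xs) y"
  using eval_Proj[of 1 "x # y # xs" g] by simp

lemma eval_Succ1: "eval g Succ [x] (Suc x)"
  by (rule eval_Succ)

lemma eval_Oracle1: "eval g Oracle [x] (g x)"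
  by (rule eval_Oracle)

lemma eval_Comp1:
  "eval g h xs y \<Longrightarrow> eval g f [y] z \<Longrightarrow> eval g (Comp f [h]) xs z"
  by (rule eval_Comp[where ys = "[y]"]) auto

lemma eval_Comp2:
  "eval g h1 xs y1 \<Longrightarrow> eval g h2 xs y2 \<Longrightarrow> eval g f [y1, y2] z
   \<Longrightarrow> eval g (Comp f [h1, h2]) xs z"
  by (rule eval_Comp[where ys = "[y1, y2]"]) auto

definition add_prog :: recf where
  "add_prog = Prim (Proj 0) (Comp Succ [Proj 0])"

lemma eval_add: "eval g add_prog [a, b] (a + b)"
proof (induction a)
  case 0
  show ?case unfolding add_prog_def using eval_Prim0[OF eval_Proj0] by simp
next
  case (Suc a)
  have "eval g (Comp Succ [Proj 0]) [a + b, a, b] (Suc (a + b))"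
    by (rule eval_Comp1[OF eval_Proj0 eval_Succ1])
  with Suc show ?case unfolding add_prog_def by (auto intro: eval_PrimS)
qed

definition triangle_prog :: recf where
  "triangle_prog = Prim Zero (Comp add_prog [Comp Succ [Proj 1], Proj 0])"

lemma eval_triangle: "eval g triangle_prog [n] (triangle n)"
proof (induction n)
  case 0
  show ?case unfolding triangle_prog_def by (simp add: eval_Prim0 eval_Zero)
next
  case (Suc n)
  have "eval g (Comp Succ [Proj 1]) [triangle n, n] (Suc n)"
    by (rule eval_Comp1[OF eval_Proj1 eval_Succ1])
  then have "eval g (Comp add_prog [Comp Succ [Proj 1], Proj 0]) [triangle n, n]
               (Suc n + triangle n)"
    by (rule eval_Comp2[OF _ eval_Proj0 eval_add])
  with Suc show ?case
    unfolding triangle_prog_def by (auto intro: eval_PrimS simp: add.commute)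
qed

(* The pairing function prod_encode (x, y) = triangle (x + y) + x. *)
definition pair_prog :: recf where
  "pair_prog = Comp add_prog [Comp triangle_prog [add_prog], Proj 0]"

lemma eval_pair: "eval g pair_prog [x, y] (prod_encode (x, y))"
  unfolding pair_prog_def prod_encode_def
  using eval_Comp2[OF eval_Comp1[OF eval_add eval_triangle] eval_Proj0 eval_add]
  by simp

definition orbit_prog :: recf where
  "orbit_prog = Prim Zero (Comp Oracle [Proj 0])"

lemma eval_orbit: "eval g orbit_prog [t] ((g ^^ t) 0)"
proof (induction t)
  case 0
  show ?case unfolding orbit_prog_def by (simp add: eval_Prim0 eval_Zero)
next
  case (Suc t)
  have "eval g (Comp Oracle [Proj 0]) [(g ^^ t) 0, t] (g ((g ^^ t) 0))"
    by (rule eval_Comp1[OF eval_Proj0 eval_Oracle1])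
  with Suc show ?case unfolding orbit_prog_def by (auto intro: eval_PrimS)
qed

definition is_zero_prog :: recf where
  "is_zero_prog = Prim (Comp Succ [Zero]) Zero"

lemma eval_is_zero: "eval g is_zero_prog [n] (if n = 0 then 1 else 0)"
proof (induction n)
  case 0
  have "eval g (Comp Succ [Zero]) [] 1"
    using eval_Comp1[OF eval_Zero eval_Succ1] by simp
  then show ?case unfolding is_zero_prog_def by (auto intro: eval_Prim0)
next
  case (Suc n)
  then show ?case unfolding is_zero_prog_def by (auto intro: eval_PrimS eval_Zero)
qed

definition parity_prog :: recf where
  "parity_prog = Prim Zero (Comp is_zero_prog [Proj 0])"

lemma eval_parity: "eval g parity_prog [n] (n mod 2)"
proof (induction n)
  case 0
  show ?case unfolding parity_prog_def by (simp add: eval_Prim0 eval_Zero)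
next
  case (Suc n)
  have "eval g (Comp is_zero_prog [Proj 0]) [n mod 2, n] (if n mod 2 = 0 then 1 else 0)"
    by (rule eval_Comp1[OF eval_Proj0 eval_is_zero])
  moreover have "(if n mod 2 = 0 then 1 else 0) = Suc n mod 2"
    by presburger
  ultimately show ?case
    using Suc unfolding parity_prog_def by (auto intro: eval_PrimS)
qed

definition decide_prog :: recf where
  "decide_prog = Comp parity_prog [Comp orbit_prog [Comp Succ [pair_prog]]]"

lemma eval_decide:
  "eval g decide_prog [x, y] ((g ^^ Suc (prod_encode (x, y))) 0 mod 2)"
  unfolding decide_prog_def
  by (rule eval_Comp1[OF eval_Comp1[OF eval_Comp1[OF eval_pair eval_Succ1] eval_orbit]
        eval_parity])

lemma recursive_in_by_orbit_parity:
  assumes "\<And>s. (g ^^ Suc s) 0 mod 2 = (if prod_decode s \<in> E then 1 else 0)"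
  shows "recursive_in E g"
proof -
  have "eval g decide_prog [x, y] (if (x, y) \<in> E then 1 else 0)" for x y
    using eval_decide[of g x y] assms[of "prod_encode (x, y)"] by simp
  then show ?thesis unfolding recursive_in_def by blast
qed

definition block :: "(nat \<Rightarrow> nat) \<Rightarrow> nat \<Rightarrow> nat" where
  "block p k = (LEAST s. k < p (Suc s))"

lemma block_bounds:
  assumes "strict_mono p" "p 0 = 0"
  shows "p (block p k) \<le> k" and "k < p (Suc (block p k))"
proof -
  have upper_exists: "k < p (Suc k)"
    using strict_mono_imp_increasing[OF assms(1), of "Suc k"] by simp
  show "k < p (Suc (block p k))"
    unfolding block_def by (rule LeastI[of _ k]) (rule upper_exists)
  show "p (block p k) \<le> k"
  proof (cases "block p k")
    case (Suc t)
    then have "\<not> k < p (Suc t)"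
      using not_less_Least[of t "\<lambda>s. k < p (Suc s)"] unfolding block_def by simp
    with Suc show ?thesis by simp
  qed (simp add: assms(2))
qed

lemma block_eq:
  assumes "strict_mono p" "p 0 = 0" and "p s \<le> k" "k < p (Suc s)"
  shows "block p k = s"
proof -
  have "block p k < Suc s"
    using block_bounds(1)[OF assms(1,2), of k] assms(4) strict_mono_less[OF assms(1)]
    by (metis le_less_trans)
  moreover have "s < Suc (block p k)"
    using block_bounds(2)[OF assms(1,2), of k] assms(3) strict_mono_less[OF assms(1)]
    by (metis le_less_trans)
  ultimately show ?thesis by simp
qed

lemma block_less_iff:
  assumes "strict_mono p" "p 0 = 0"
  shows "block p k < n \<longleftrightarrow> k < p n"
proof
  assume "block p k < n"
  then have "p (Suc (block p k)) \<le> p n"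
    using strict_mono_less_eq[OF assms(1)] by simp
  with block_bounds(2)[OF assms, of k] show "k < p n" by simp
next
  assume "k < p n"
  with block_bounds(1)[OF assms, of k] show "block p k < n"
    using strict_mono_less[OF assms(1)] by (metis le_less_trans)
qed

lemma uncovered_avoids_finitely_many:
  fixes f :: "nat \<Rightarrow> nat" and G :: "nat \<Rightarrow> nat \<Rightarrow> nat"
  assumes "\<not> finitely_covered f (range G)"
  shows "\<exists>k. q < k \<and> (\<forall>i\<le>s. f k \<noteq> G i k)"
proof -
  let ?hs = "map G [0..<Suc s]"
  have "?hs \<noteq> []" "set ?hs \<subseteq> range G" by auto
  with assms have "infinite {k. f k \<notin> (\<lambda>h. h k) ` set ?hs}"
    unfolding finitely_covered_def by blast
  then obtain k where "q < k" "f k \<notin> (\<lambda>h. h k) ` set ?hs"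
    unfolding infinite_nat_iff_unbounded by blast
  then show ?thesis by (intro exI[of _ k]) (auto simp: image_iff)
qed

context
  fixes G F :: "nat \<Rightarrow> nat \<Rightarrow> nat" and E :: "(nat \<times> nat) set"
  assumes NFC: "\<forall>n. \<not> finitely_covered (F n) (range G)"
begin

definition witness :: "nat \<Rightarrow> nat \<Rightarrow> nat \<Rightarrow> nat" where
  "witness n s q = (LEAST k. q < k \<and> (\<forall>i\<le>s. F n k \<noteq> G i k))"

lemma witness: "q < witness n s q \<and> (\<forall>i\<le>s. F n (witness n s q) \<noteq> G i (witness n s q))"
  unfolding witness_def
  by (rule LeastI_ex) (rule uncovered_avoids_finitely_many[OF NFC[rule_format]])

(* Stage s serves requirement n = fst (prod_decode s).  The next marker lies
   beyond the stage's witness, exceeds G 0, ..., G s at the current marker,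
   and its parity records whether prod_decode s is in E. *)
definition next_marker :: "nat \<Rightarrow> nat \<Rightarrow> nat" where
  "next_marker s q =
     2 * Suc (witness (fst (prod_decode s)) s q + (\<Sum>i\<le>s. G i q))
     + (if prod_decode s \<in> E then 1 else 0)"

primrec marker :: "nat \<Rightarrow> nat" where
  "marker 0 = 0"
| "marker (Suc s) = next_marker s (marker s)"

definition agreement_point :: "nat \<Rightarrow> nat" where
  "agreement_point s = witness (fst (prod_decode s)) s (marker s)"

lemma agreement_point_bounds:
  "marker s < agreement_point s" "agreement_point s < marker (Suc s)"
  using witness unfolding agreement_point_def by (auto simp: next_marker_def)

lemma strict_mono_marker: "strict_mono marker"
  unfolding strict_mono_Suc_iff using agreement_point_bounds less_trans by blast

lemma block_marker: "block marker (marker s) = s"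
  by (rule block_eq) (use strict_mono_marker agreement_point_bounds[of s] in auto)

lemma block_agreement_point: "block marker (agreement_point s) = s"
  by (rule block_eq) (use strict_mono_marker agreement_point_bounds[of s] in auto)

definition constructed :: "nat \<Rightarrow> nat" where
  "constructed k = (let s = block marker k in
            if k = marker s then marker (Suc s)
            else if k = agreement_point s then F (fst (prod_decode s)) k
            else Suc (\<Sum>i\<le>s. G i k))"

lemma constructed_marker: "constructed (marker s) = marker (Suc s)"
  unfolding constructed_def Let_def block_marker by simp

lemma constructed_agreement_point:
  "constructed (agreement_point s) = F (fst (prod_decode s)) (agreement_point s)"
  using agreement_point_bounds(1)[of s]
  unfolding constructed_def Let_def block_agreement_point by simp

lemma constructed_avoids:
  assumes "i \<le> block marker k"
  shows "constructed k \<noteq> G i k"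
proof -
  define s where "s = block marker k"
  have below_sum: "G i q \<le> (\<Sum>i\<le>s. G i q)" for q
    using assms unfolding s_def by (intro member_le_sum) auto
  consider "k = marker s" | "k \<noteq> marker s" "k = agreement_point s"
    | "k \<noteq> marker s" "k \<noteq> agreement_point s" by blast
  then show ?thesis
  proof cases
    case 1
    then have "constructed k = next_marker s k" using constructed_marker by simp
    with below_sum[of k] show ?thesis unfolding next_marker_def by auto
  next
    case 2
    have "i \<le> s" using assms unfolding s_def .
    then have "F (fst (prod_decode s)) k \<noteq> G i k"
      using witness 2(2) unfolding agreement_point_def by blast
    with 2(2) show ?thesis using constructed_agreement_point by simp
  next
    case 3
    then have "constructed k = Suc (\<Sum>i\<le>s. G i k)"
      unfolding constructed_def s_def Let_def by simp
    with below_sum[of k] show ?thesis by simp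
  qed
qed

(* Agreement with G n can only happen in the first n blocks. *)
lemma constructed_almost_disjoint: "almost_disjoint constructed (G n)"
proof -
  have "{k. constructed k = G n k} \<subseteq> {k. block marker k < n}"
  proof
    fix k assume "k \<in> {k. constructed k = G n k}"
    then show "k \<in> {k. block marker k < n}"
      using constructed_avoids[of n k] by (cases "n \<le> block marker k") auto
  qed
  also have "\<dots> = {..<marker n}"
    using block_less_iff[OF strict_mono_marker] by auto
  finally show ?thesis
    unfolding almost_disjoint_def using finite_subset by blast
qed

lemma constructed_orbit: "(constructed ^^ t) 0 = marker t"
  by (induction t) (simp_all add: constructed_marker del: marker.simps(2))

lemma constructed_recursive: "recursive_in E constructed"
  by (rule recursive_in_by_orbit_parity) (unfold constructed_orbit, simp add: next_marker_def)

(* Every stage prod_encode (n, B) contributes an agreement with F n beyond B. *)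
lemma constructed_agrees_infinitely: "infinite {k. F n k = constructed k}"
  unfolding infinite_nat_iff_unbounded
proof
  fix B
  define s where "s = prod_encode (n, B)"
  have "B \<le> s" unfolding s_def by (rule le_prod_encode_2)
  also have "s \<le> marker s" using strict_mono_imp_increasing[OF strict_mono_marker] .
  also have "\<dots> < agreement_point s" by (rule agreement_point_bounds)
  finally have "B < agreement_point s" .
  moreover have "F n (agreement_point s) = constructed (agreement_point s)"
    using constructed_agreement_point unfolding s_def by simp
  ultimately show "\<exists>k>B. k \<in> {k. F n k = constructed k}" by blast
qed

end

theorem mainTheorem7:
  fixes G :: "nat \<Rightarrow> nat \<Rightarrow> nat"
    and F :: "nat \<Rightarrow> nat \<Rightarrow> nat"
    and E :: "(nat \<times> nat) set"
  assumes AD: "\<forall>n m. G n \<noteq> G m \<longrightarrow> almost_disjoint (G n) (G m)"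
    and NFC: "\<forall>n. \<not> finitely_covered (F n) (range G)"
  shows "\<exists>g :: nat \<Rightarrow> nat. (\<forall>n. almost_disjoint g (G n)) \<and> recursive_in E g
           \<and> (\<forall>n. infinite {k. F n k = g k})"
proof (intro exI conjI allI)
  fix n
  show "almost_disjoint (constructed G F E) (G n)"
    by (rule constructed_almost_disjoint[OF NFC])
  show "infinite {k. F n k = constructed G F E k}"
    by (rule constructed_agrees_infinitely[OF NFC])
next
  show "recursive_in E (constructed G F E)"
    by (rule constructed_recursive[OF NFC])
qed

end
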